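(* Let $G$ be a graph on at most $n$ vertices that contains no copy of the complete graph $K_5$. Then $\tilde b(G)\le 3^{n/4}$.
   Context: $\mathrm{Ind}(G)$ is the independence complex of $G$ (including the empty face), and $\tilde b(G)=\sum_{i\ge-1}\dim_{\mathbb{K}}\widetilde H_i(\mathrm{Ind}(G);\mathbb{K})$ for a fixed field $\mathbb{K}$; the empty graph has $\tilde b=1$. *)

theory Defs
  imports Complex_Main "HOL-Library.Function_Algebras"
begin

definition simple_graph :: "'a set \<Rightarrow> 'a set set \<Rightarrow> bool" where
  "simple_graph V E \<longleftrightarrow> finite V \<and> (\<forall>e\<in>E. \<exists>u v. u \<in> V \<and> v \<in> V \<and> u \<noteq> v \<and> e = {u, v})"

definition has_clique :: "'a set \<Rightarrow> 'a set set \<Rightarrow> nat \<Rightarrow> bool" where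
  "has_clique V E r \<longleftrightarrow> (\<exists>S. S \<subseteq> V \<and> card S = r \<and> (\<forall>u\<in>S. \<forall>v\<in>S. u \<noteq> v \<longrightarrow> {u, v} \<in> E))"

definition ind_complex :: "'a set \<Rightarrow> 'a set set \<Rightarrow> 'a set set" where
  "ind_complex V E = {S. S \<subseteq> V \<and> (\<forall>u\<in>S. \<forall>v\<in>S. {u, v} \<notin> E)}"

text \<open>Simplicial chains with coefficients in a field 'k, indexed by the cardinality d of
  the faces (so d = i + 1 for the usual dimension i; d = 0 is the empty face, giving the
  augmented/reduced chain complex).\<close>
definition chains :: "'a set set \<Rightarrow> nat \<Rightarrow> ('a set \<Rightarrow> 'k::field) set" where
  "chains K d = {f. \<forall>\<sigma>. f \<sigma> \<noteq> 0 \<longrightarrow> \<sigma> \<in> K \<and> card \<sigma> = d}"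

text \<open>Sign of the face tau in the boundary of sigma = tau + {v}, vertices ordered increasingly:
  (-1)^(position of v in sigma).\<close>
definition bd_sign :: "'a::linorder set \<Rightarrow> 'a set \<Rightarrow> 'k::field" where
  "bd_sign \<sigma> \<tau> = (-1) ^ card {x \<in> \<tau>. x < the_elem (\<sigma> - \<tau>)}"

definition boundary :: "'a::linorder set set \<Rightarrow> ('a set \<Rightarrow> 'k::field) \<Rightarrow> ('a set \<Rightarrow> 'k)" where
  "boundary K f = (\<lambda>\<tau>. \<Sum>\<sigma>\<in>{\<sigma>\<in>K. \<tau> \<subseteq> \<sigma> \<and> card \<sigma> = card \<tau> + 1}. bd_sign \<sigma> \<tau> * f \<sigma>)"

definition fdim :: "('b \<Rightarrow> 'k::field) set \<Rightarrow> nat" where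
  "fdim S = vector_space.dim (\<lambda>c f x. c * f x) S"

text \<open>Reduced Betti number in degree d - 1:
  dim ker(bd : C_d \<rightarrow> C_(d-1)) - dim im(bd : C_(d+1) \<rightarrow> C_d), where bd on C_0 is the zero map
  (C_(-1) = 0).\<close>
definition reduced_betti :: "'k::field itself \<Rightarrow> 'a::linorder set set \<Rightarrow> nat \<Rightarrow> nat" where
  "reduced_betti _ K d =
     fdim {f \<in> (chains K d :: ('a set \<Rightarrow> 'k) set). d = 0 \<or> boundary K f = (\<lambda>_. 0)}
     - fdim (boundary K ` (chains K (Suc d) :: ('a set \<Rightarrow> 'k) set))"

text \<open>Total reduced Betti number b~ of a finite complex on vertex set V:
  sum over all degrees i \<ge> -1, i.e. over face cardinalities d = 0 .. |V|
  (all chain groups vanish beyond that).\<close>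
definition total_reduced_betti :: "'k::field itself \<Rightarrow> 'a::linorder set \<Rightarrow> 'a set set \<Rightarrow> nat" where
  "total_reduced_betti k V K = (\<Sum>d\<le>card V. reduced_betti k K d)"

definition btilde :: "'k::field itself \<Rightarrow> 'a::linorder set \<Rightarrow> 'a set set \<Rightarrow> nat" where
  "btilde k V E = total_reduced_betti k V (ind_complex V E)"

end

theory Submission
  imports Defs
begin

text \<open>
  Fix a vertex v.  The chains of Ind(G) supported on faces avoiding v form the chain complex of
  Ind(G - v); those supported on faces containing v become, after deleting v with a sign, the
  chains of Ind(G - N[v]) one degree lower.  Comparing dimensions of chain spaces and of boundary
  images degree by degree gives b~(G) <= b~(G - v) + b~(G - N[v]), and b~(G) = 0 when v is
  isolated, since Ind(G) is then a cone.

  Take v of minimum degree d with neighbours w_1, ..., w_d and split off w_1, ..., w_d in turn: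
  the last graph has v isolated, so b~(G) is at most the sum over i of
  b~(G - {w_1, ..., w_(i-1)} - N[w_i]), each graph having at most n - d - 1 vertices.  By
  induction on n this is at most d 3^((n-d-1)/4) <= 3^(n/4), because d <= 3^((d+1)/4) unless
  d = 4.  If d = 4, K_5-freeness yields two non-adjacent neighbours; listing them first makes the
  second graph lose one more vertex, and 3 * 3^((n-5)/4) + 3^((n-6)/4) <= 3^(n/4).
\<close>

section \<open>Dimensions of spaces of field-valued functions\<close>

abbreviation sc :: "'k::field \<Rightarrow> ('b \<Rightarrow> 'k) \<Rightarrow> ('b \<Rightarrow> 'k)" where
  "sc \<equiv> (\<lambda>c f x. c * f x)"

interpretation fv: vector_space "sc :: 'k::field \<Rightarrow> ('b \<Rightarrow> 'k) \<Rightarrow> ('b \<Rightarrow> 'k)"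
  by unfold_locales (auto simp: algebra_simps)

interpretation fvp: vector_space_pair "sc :: 'k::field \<Rightarrow> ('b \<Rightarrow> 'k) \<Rightarrow> ('b \<Rightarrow> 'k)"
   "sc :: 'k::field \<Rightarrow> ('c \<Rightarrow> 'k) \<Rightarrow> ('c \<Rightarrow> 'k)"
  by unfold_locales

lemma fv_linearI:
  fixes f :: "('b \<Rightarrow> 'k::field) \<Rightarrow> ('c \<Rightarrow> 'k)"
  assumes "\<And>x y. f (x + y) = f x + f y" and "\<And>c x. f (sc c x) = sc c (f x)"
  shows "Vector_Spaces.linear sc sc f"
  unfolding Vector_Spaces.linear_iff by (simp add: assms fv.vector_space_axioms)

lemma fv_span_disjoint_eq_0:
  fixes A B :: "('b \<Rightarrow> 'k::field) set"
  assumes ind: "fv.independent (A \<union> B)" and dis: "A \<inter> B = {}" and fA: "finite A" and fB: "finite B"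
    and xA: "x \<in> fv.span A" and xB: "x \<in> fv.span B"
  shows "x = 0"
proof -
  obtain u where u: "x = (\<Sum>a\<in>A. sc (u a) a)" using xA fv.span_finite[OF fA] by auto
  obtain w where w: "x = (\<Sum>a\<in>B. sc (w a) a)" using xB fv.span_finite[OF fB] by auto
  define t where "t v = (if v \<in> A then u v else - w v)" for v
  have "(\<Sum>v\<in>A \<union> B. sc (t v) v) = (\<Sum>v\<in>A. sc (t v) v) + (\<Sum>v\<in>B. sc (t v) v)"
    by (rule sum.union_disjoint) (use fA fB dis in auto)
  also have "(\<Sum>v\<in>A. sc (t v) v) = x" unfolding u by (rule sum.cong) (auto simp: t_def)
  also have "(\<Sum>v\<in>B. sc (t v) v) = (\<Sum>v\<in>B. - sc (w v) v)"
    by (rule sum.cong) (use dis in \<open>auto simp: t_def\<close>)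
  also have "\<dots> = - x" unfolding w by (simp add: sum_negf)
  finally have z: "(\<Sum>v\<in>A \<union> B. sc (t v) v) = 0" by (simp add: zero_fun_def)
  have "t a = 0" if "a \<in> A" for a
    by (rule fv.independentD[OF ind _ subset_refl z]) (use fA fB that in auto)
  then show ?thesis unfolding u by (simp add: fun_eq_iff t_def)
qed

lemma fv_inj_on_span_complement:
  fixes f :: "('b \<Rightarrow> 'k::field) \<Rightarrow> ('c \<Rightarrow> 'k)"
  assumes lin: "Vector_Spaces.linear sc sc f" and ind: "fv.independent B" and fin: "finite B"
    and "A \<subseteq> B" and ker: "\<And>x. x \<in> fv.span B \<Longrightarrow> f x = 0 \<Longrightarrow> x \<in> fv.span A"
  shows "inj_on f (fv.span (B - A))"
  unfolding fvp.linear_inj_on_iff_eq_0[OF lin fv.subspace_span]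
proof (intro ballI impI)
  fix x assume x: "x \<in> fv.span (B - A)" "f x = 0"
  have "x \<in> fv.span A" using ker x fv.span_mono[of "B - A" B] by auto
  moreover have "fv.independent (A \<union> (B - A))" using \<open>A \<subseteq> B\<close> ind by (simp add: Un_absorb1)
  ultimately show "x = 0"
    using fv_span_disjoint_eq_0[of A "B - A" x] fin x(1) finite_subset[OF \<open>A \<subseteq> B\<close> fin] by blast
qed

lemma fv_subspace_kernel:
  fixes f :: "('b \<Rightarrow> 'k::field) \<Rightarrow> ('c \<Rightarrow> 'k)"
  assumes lin: "Vector_Spaces.linear sc sc f" and S: "fv.subspace S"
  shows "fv.subspace {x\<in>S. f x = 0}"
  using S unfolding fv.subspace_def
  by (auto simp: fvp.linear_0[OF lin] fvp.linear_add[OF lin] fvp.linear_scale[OF lin, simplified])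

lemma fv_linear_image_subset_span:
  fixes f :: "('b \<Rightarrow> 'k::field) \<Rightarrow> ('c \<Rightarrow> 'k)"
  assumes lin: "Vector_Spaces.linear sc sc f" and S: "S \<subseteq> fv.span (A \<union> J)"
    and A: "\<And>x. x \<in> fv.span A \<Longrightarrow> f x = 0"
  shows "f ` S \<subseteq> fv.span (f ` J)"
proof
  fix y assume "y \<in> f ` S"
  then obtain x where x: "x \<in> fv.span (A \<union> J)" "y = f x" using S by auto
  then obtain a b where ab: "x = a + b" "a \<in> fv.span A" "b \<in> fv.span J"
    unfolding fv.span_Un by auto
  then have "y = f b" using x(2) A fvp.linear_add[OF lin] by simp
  then show "y \<in> fv.span (f ` J)" using ab(3) fvp.linear_span_image[OF lin] by auto
qed

text \<open>The function spaces are infinite-dimensional, so the library's rank-nullity theorem for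
  finite-dimensional spaces does not apply; a finite spanning set \<open>F\<close> of \<open>S\<close> suffices.\<close>

lemma fv_rank_nullity:
  fixes f :: "('b \<Rightarrow> 'k::field) \<Rightarrow> ('c \<Rightarrow> 'k)"
  assumes lin: "Vector_Spaces.linear sc sc f" and S: "fv.subspace S"
    and F: "finite F" "S \<subseteq> fv.span F"
  shows "fv.dim S = fv.dim (f ` S) + fv.dim {x\<in>S. f x = 0}"
proof -
  define N where "N = {x\<in>S. f x = 0}"
  have subN: "fv.subspace N" unfolding N_def by (rule fv_subspace_kernel[OF lin S])
  obtain A where A: "A \<subseteq> N" "fv.independent A" "N \<subseteq> fv.span A" "card A = fv.dim N"
    by (rule fv.basis_exists)
  have "A \<subseteq> S" using A(1) by (auto simp: N_def)
  then obtain B where B: "A \<subseteq> B" "B \<subseteq> S" "fv.independent B" "S \<subseteq> fv.span B"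
    using fv.maximal_independent_subset_extend[OF _ A(2)] by metis
  have finB: "finite B" using fv.independent_span_bound[OF F(1) B(3)] B(2) F(2) by auto
  have spanB: "fv.span B \<subseteq> S" using B(2) S by (rule fv.span_minimal)
  define J where "J = B - A"
  have cardB: "card B = card A + card J"
    using card_Un_disjoint[of A J] finite_subset[OF B(1) finB] finB B(1)
    by (auto simp: J_def Un_absorb1)
  have inj: "inj_on f (fv.span J)"
    unfolding J_def using spanB A(3)
    by (intro fv_inj_on_span_complement[OF lin B(3) finB B(1)]) (auto simp: N_def)
  have injJ: "inj_on f J" using inj fv.span_superset inj_on_subset by blast
  have indfJ: "fv.independent (f ` J)"
    using fvp.linear_independent_injective_image[OF lin _ inj] fv.independent_mono[OF B(3)]
    by (auto simp: J_def)
  have "f ` S \<subseteq> fv.span (f ` J)"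
  proof (rule fv_linear_image_subset_span[OF lin])
    show "S \<subseteq> fv.span (A \<union> J)" using B(1,4) by (simp add: J_def Un_absorb1)
    show "f x = 0" if "x \<in> fv.span A" for x
      using that fv.span_minimal[OF A(1) subN] by (auto simp: N_def)
  qed
  moreover have "f ` J \<subseteq> f ` S" using B(2) by (auto simp: J_def)
  ultimately have "fv.dim (f ` S) = card J"
    using fv.dim_unique[of "f ` J" "f ` S"] indfJ card_image[OF injJ] by auto
  moreover have "fv.dim S = card B" using fv.basis_card_eq_dim[OF B(2,4,3)] by simp
  ultimately show ?thesis using cardB A(4) unfolding N_def by simp
qed

lemma fv_dim_subset:
  fixes T S :: "('b \<Rightarrow> 'k::field) set"
  assumes "T \<subseteq> S" and F: "finite F" "S \<subseteq> fv.span F"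
  shows "fv.dim T \<le> fv.dim S"
proof -
  obtain A where A: "A \<subseteq> T" "fv.independent A" "T \<subseteq> fv.span A" "card A = fv.dim T"
    by (rule fv.basis_exists)
  have "A \<subseteq> S" using A(1) assms(1) by auto
  then obtain B where B: "A \<subseteq> B" "B \<subseteq> S" "fv.independent B" "S \<subseteq> fv.span B"
    using fv.maximal_independent_subset_extend[OF _ A(2)] by metis
  have "finite B" using fv.independent_span_bound[OF F(1) B(3)] B(2) F(2) by auto
  moreover have "fv.dim S = card B" using fv.basis_card_eq_dim[OF B(2,4,3)] by simp
  ultimately show ?thesis using A(4) card_mono[OF _ B(1)] by simp
qed

lemma fv_dim_zero: "fv.dim {0::'b \<Rightarrow> 'k::field} = 0"
  using fv.dim_unique[of "{}" "{0::'b \<Rightarrow> 'k}" 0] fv.independent_empty by auto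

lemma fv_dim_image_inj:
  fixes f :: "('b \<Rightarrow> 'k::field) \<Rightarrow> ('c \<Rightarrow> 'k)"
  assumes lin: "Vector_Spaces.linear sc sc f" and S: "fv.subspace S"
    and F: "finite F" "S \<subseteq> fv.span F" and inj: "\<And>x. x \<in> S \<Longrightarrow> f x = 0 \<Longrightarrow> x = 0"
  shows "fv.dim (f ` S) = fv.dim S"
proof -
  have "{x\<in>S. f x = 0} = {0}" using inj fv.subspace_0[OF S] fvp.linear_0[OF lin] by auto
  then show ?thesis using fv_rank_nullity[OF lin S F] fv_dim_zero by simp
qed

lemma fv_dim_image_le:
  fixes f :: "('b \<Rightarrow> 'k::field) \<Rightarrow> ('c \<Rightarrow> 'k)"
  assumes lin: "Vector_Spaces.linear sc sc f" and S: "fv.subspace S"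
    and F: "finite F" "S \<subseteq> fv.span F"
  shows "fv.dim (f ` S) \<le> fv.dim S"
  using fv_rank_nullity[OF lin S F] by simp

lemma sum_fun_apply: "(\<Sum>i\<in>A. f i) x = (\<Sum>i\<in>A. f i x)"
  by (induction A rule: infinite_finite_induct) auto

definition delta :: "'b \<Rightarrow> 'b \<Rightarrow> 'k::field" where
  "delta s = (\<lambda>x. if x = s then 1 else 0)"

lemma fv_in_span_delta:
  fixes f :: "'b \<Rightarrow> 'k::field"
  assumes P: "finite P" and f: "\<And>x. f x \<noteq> 0 \<Longrightarrow> x \<in> P"
  shows "f \<in> fv.span (delta ` P)"
proof -
  have "f = (\<Sum>s\<in>P. sc (f s) (delta s))"
  proof
    fix x
    have "(\<Sum>s\<in>P. sc (f s) (delta s)) x = (\<Sum>s\<in>P. f s * delta s x)"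
      by (simp add: sum_fun_apply)
    also have "\<dots> = (if x \<in> P then f x else 0)"
      by (simp add: delta_def P if_distrib[of "\<lambda>y. f _ * y"] cong: if_cong)
    also have "\<dots> = f x" using f by auto
    finally show "f x = (\<Sum>s\<in>P. sc (f s) (delta s)) x" by simp
  qed
  also have "\<dots> \<in> fv.span (delta ` P)"
    by (intro fv.span_sum fv.span_scale fv.span_base) auto
  finally show ?thesis .
qed

section \<open>Chain complexes\<close>

lemma chains_subspace: "fv.subspace (chains K d)"
  unfolding fv.subspace_def chains_def by (auto; metis add.left_neutral)

lemma boundary_linear: "Vector_Spaces.linear sc sc (boundary K)"
  by (rule fv_linearI)
     (auto simp: boundary_def fun_eq_iff sum.distrib distrib_left sum_distrib_left mult.left_commute)

lemma boundary_image_subspace: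
  "fv.subspace (boundary K ` (chains K d :: ('a::linorder set \<Rightarrow> 'k::field) set))"
  by (rule fvp.linear_subspace_image[OF boundary_linear chains_subspace])

lemma boundary_nonzero_imp_subset:
  assumes "K \<subseteq> Pow V" "boundary K f \<tau> \<noteq> 0" shows "\<tau> \<subseteq> V"
proof -
  from assms(2) obtain \<sigma> where "\<sigma> \<in> K" "\<tau> \<subseteq> \<sigma>" unfolding boundary_def
    by (metis (no_types, lifting) empty_Collect_eq sum.empty)
  then show ?thesis using assms(1) by auto
qed

lemma boundary_chains_0: "f \<in> chains K 0 \<Longrightarrow> boundary K f = 0"
  unfolding boundary_def chains_def by (auto simp: fun_eq_iff intro!: sum.neutral)

lemma boundary_subcomplex:
  assumes "finite K" "K' \<subseteq> K" "\<And>\<sigma>. f \<sigma> \<noteq> 0 \<Longrightarrow> \<sigma> \<in> K'"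
  shows "boundary K f = boundary K' f"
  unfolding boundary_def by (rule ext, rule sum.mono_neutral_right) (use assms in auto)

definition chain_dim :: "'k::field itself \<Rightarrow> 'a::linorder set set \<Rightarrow> nat \<Rightarrow> nat" where
  "chain_dim _ K d = fv.dim (chains K d :: ('a set \<Rightarrow> 'k) set)"

definition boundary_rank :: "'k::field itself \<Rightarrow> 'a::linorder set set \<Rightarrow> nat \<Rightarrow> nat" where
  "boundary_rank _ K d = fv.dim (boundary K ` (chains K d :: ('a set \<Rightarrow> 'k) set))"

lemma reduced_betti_eq:
  assumes V: "finite V" and K: "K \<subseteq> Pow V"
  shows "reduced_betti TYPE('k::field) K d
    = (chain_dim TYPE('k) K d - boundary_rank TYPE('k) K d) - boundary_rank TYPE('k) K (Suc d)"
proof -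
  have cycles: "{f \<in> (chains K d :: ('a set \<Rightarrow> 'k) set). d = 0 \<or> boundary K f = (\<lambda>_. 0)}
     = {f \<in> chains K d. boundary K f = 0}"
    using boundary_chains_0[of _ K] by (auto simp: zero_fun_def)
  have "(chains K d :: ('a set \<Rightarrow> 'k) set) \<subseteq> fv.span (delta ` Pow V)"
    using V K by (auto simp: chains_def intro!: fv_in_span_delta)
  then have "chain_dim TYPE('k) K d = boundary_rank TYPE('k) K d +
      fv.dim {f \<in> (chains K d :: ('a set \<Rightarrow> 'k) set). boundary K f = 0}"
    unfolding chain_dim_def boundary_rank_def
    by (intro fv_rank_nullity[OF boundary_linear chains_subspace]) (use V in simp_all)
  then show ?thesis unfolding reduced_betti_def cycles fdim_def boundary_rank_def by simp
qed

section \<open>Splitting the chains at a vertex\<close>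

definition closed_nbhd :: "'a set set \<Rightarrow> 'a \<Rightarrow> 'a set" where
  "closed_nbhd E v = insert v {u. {u, v} \<in> E}"

definition with_vertex :: "'a \<Rightarrow> ('a set \<Rightarrow> 'k::field) \<Rightarrow> ('a set \<Rightarrow> 'k)" where
  "with_vertex v f = (\<lambda>\<sigma>. if v \<in> \<sigma> then f \<sigma> else 0)"

definition without_vertex :: "'a \<Rightarrow> ('a set \<Rightarrow> 'k::field) \<Rightarrow> ('a set \<Rightarrow> 'k)" where
  "without_vertex v f = (\<lambda>\<sigma>. if v \<in> \<sigma> then 0 else f \<sigma>)"

definition vertex_sign :: "'a::linorder \<Rightarrow> 'a set \<Rightarrow> 'k::field" where
  "vertex_sign v \<rho> = (-1) ^ card {x\<in>\<rho>. v < x}"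

text \<open>Moves a chain supported on faces containing \<open>v\<close> to the link of \<open>v\<close>, one degree lower;
  the sign makes it commute with the boundary maps (\<open>delete_vertex_boundary\<close>).\<close>

definition delete_vertex :: "'a::linorder \<Rightarrow> ('a set \<Rightarrow> 'k::field) \<Rightarrow> ('a set \<Rightarrow> 'k)" where
  "delete_vertex v g = (\<lambda>\<rho>. if v \<in> \<rho> then 0 else vertex_sign v \<rho> * g (insert v \<rho>))"

lemma with_vertex_linear: "Vector_Spaces.linear sc sc (with_vertex v)"
  by (rule fv_linearI) (auto simp: with_vertex_def fun_eq_iff)

lemma without_vertex_linear: "Vector_Spaces.linear sc sc (without_vertex v)"
  by (rule fv_linearI) (auto simp: without_vertex_def fun_eq_iff)

lemma delete_vertex_linear: "Vector_Spaces.linear sc sc (delete_vertex v)"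
  by (rule fv_linearI) (auto simp: delete_vertex_def fun_eq_iff algebra_simps)

lemma vertex_sign_square: "vertex_sign v \<rho> * vertex_sign v \<rho> = 1"
  by (simp add: vertex_sign_def power_mult_distrib[symmetric])

lemma bd_sign_nonzero: "bd_sign \<sigma> \<tau> \<noteq> 0"
  by (simp add: bd_sign_def)

lemma card_filter_insert:
  assumes "finite A" "a \<notin> A"
  shows "card {x \<in> insert a A. P x} = card {x \<in> A. P x} + (if P a then 1 else 0)"
proof -
  have "{x \<in> insert a A. P x} = (if P a then insert a {x \<in> A. P x} else {x \<in> A. P x})" by auto
  then show ?thesis using assms by simp
qed

lemma bd_sign_insert_vertex:
  fixes \<rho> :: "'a::linorder set"
  assumes "finite \<rho>" "v \<notin> \<rho>" "u \<notin> \<rho>" "u \<noteq> v"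
  shows "vertex_sign v \<rho> * bd_sign (insert v (insert u \<rho>)) (insert v \<rho>)
    = (bd_sign (insert u \<rho>) \<rho> * vertex_sign v (insert u \<rho>) :: 'k::field)"
proof -
  have d1: "insert v (insert u \<rho>) - insert v \<rho> = {u}" using assms by auto
  have d2: "insert u \<rho> - \<rho> = {u}" using assms by auto
  have c1: "card {x\<in>insert v \<rho>. x < u} = card {x\<in>\<rho>. x < u} + (if v < u then 1 else 0)"
    by (rule card_filter_insert) (use assms in auto)
  have c2: "card {x\<in>insert u \<rho>. v < x} = card {x\<in>\<rho>. v < x} + (if v < u then 1 else 0)"
    by (rule card_filter_insert) (use assms in auto)
  show ?thesis unfolding bd_sign_def vertex_sign_def d1 d2 the_elem_eq c1 c2
    by (simp add: power_add)
qed

lemma ind_complex_subset_Pow: "ind_complex V E \<subseteq> Pow V"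
  by (auto simp: ind_complex_def)

lemma finite_ind_complex: "finite V \<Longrightarrow> finite (ind_complex V E)"
  using ind_complex_subset_Pow by (metis finite_Pow_iff finite_subset)

lemma finite_face: "finite V \<Longrightarrow> \<sigma> \<in> ind_complex V E \<Longrightarrow> finite \<sigma>"
  by (auto simp: ind_complex_def intro: finite_subset)

lemma ind_complex_Diff_vertex: "ind_complex (V - {v}) E = {\<sigma> \<in> ind_complex V E. v \<notin> \<sigma>}"
  by (auto simp: ind_complex_def)

lemma ind_complex_Diff_closed_nbhd:
  assumes "v \<in> V" and "\<forall>u. {u} \<notin> E"
  shows "\<rho> \<in> ind_complex (V - closed_nbhd E v) E \<longleftrightarrow> v \<notin> \<rho> \<and> insert v \<rho> \<in> ind_complex V E"
  using assms unfolding ind_complex_def closed_nbhd_def by (auto simp: insert_commute)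

lemma fv_subset_span_delta_Pow:
  fixes S :: "('a set \<Rightarrow> 'k::field) set"
  assumes "finite V" and "\<And>f x. f \<in> S \<Longrightarrow> f x \<noteq> 0 \<Longrightarrow> x \<subseteq> V"
  shows "S \<subseteq> fv.span (delta ` Pow V)"
  using assms by (auto intro!: fv_in_span_delta)

lemma chains_ind_complex_above_card:
  assumes "finite V" "card V < d"
  shows "(chains (ind_complex V E) d :: ('a set \<Rightarrow> 'k::field) set) = {0}"
proof -
  have "f \<sigma> = 0" if "f \<in> (chains (ind_complex V E) d :: ('a set \<Rightarrow> 'k) set)" for f \<sigma>
  proof (rule ccontr)
    assume "f \<sigma> \<noteq> 0"
    then have "\<sigma> \<subseteq> V" "card \<sigma> = d" using that by (auto simp: chains_def ind_complex_def)
    then show False using card_mono[OF assms(1), of \<sigma>] assms(2) by simp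
  qed
  then show ?thesis using fv.subspace_0[OF chains_subspace] by (auto simp: fun_eq_iff)
qed

lemma btilde_eq_sum_upto:
  fixes V :: "'a::linorder set"
  assumes "finite V" "card V \<le> N"
  shows "btilde TYPE('k::field) V E = (\<Sum>d\<le>N. reduced_betti TYPE('k) (ind_complex V E) d)"
  unfolding btilde_def total_reduced_betti_def
proof (rule sum.mono_neutral_left)
  show "\<forall>d\<in>{..N} - {..card V}. reduced_betti TYPE('k) (ind_complex V E) d = 0"
  proof
    fix d assume "d \<in> {..N} - {..card V}"
    then have "card V < d" by simp
    then have "chain_dim TYPE('k) (ind_complex V E) d = 0"
      unfolding chain_dim_def using chains_ind_complex_above_card[OF assms(1)] fv_dim_zero by metis
    then show "reduced_betti TYPE('k) (ind_complex V E) d = 0"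
      using reduced_betti_eq[OF assms(1) ind_complex_subset_Pow, where 'k='k] by simp
  qed
qed (use assms in auto)

context
  fixes V :: "'a::linorder set" and E :: "'a set set" and v :: 'a
  assumes finV: "finite V" and vV: "v \<in> V" and noloop: "\<forall>u. {u} \<notin> E"
begin

definition star_chains :: "nat \<Rightarrow> ('a set \<Rightarrow> 'k::field) set" where
  "star_chains d = {g. \<forall>\<sigma>. g \<sigma> \<noteq> 0 \<longrightarrow> \<sigma> \<in> ind_complex V E \<and> card \<sigma> = d \<and> v \<in> \<sigma>}"

lemma chains_span_delta_Pow:
  "(chains (ind_complex V E) d :: ('a set \<Rightarrow> 'k::field) set) \<subseteq> fv.span (delta ` Pow V)"
  by (rule fv_subset_span_delta_Pow[OF finV]) (force simp: chains_def ind_complex_def)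

lemma boundary_image_span_delta_Pow:
  "boundary (ind_complex V E) ` (S :: ('a set \<Rightarrow> 'k::field) set) \<subseteq> fv.span (delta ` Pow V)"
  by (rule fv_subset_span_delta_Pow[OF finV])
     (use boundary_nonzero_imp_subset[OF ind_complex_subset_Pow] in blast)

lemma with_vertex_chains:
  "with_vertex v ` (chains (ind_complex V E) d :: ('a set \<Rightarrow> 'k::field) set) = star_chains d"
proof
  show "with_vertex v ` (chains (ind_complex V E) d :: ('a set \<Rightarrow> 'k) set) \<subseteq> star_chains d"
    by (auto simp: star_chains_def with_vertex_def chains_def split: if_splits)
  show "star_chains d \<subseteq> with_vertex v ` (chains (ind_complex V E) d :: ('a set \<Rightarrow> 'k) set)"
  proof
    fix g :: "'a set \<Rightarrow> 'k" assume g: "g \<in> star_chains d"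
    then have "with_vertex v g = g" by (auto simp: star_chains_def with_vertex_def fun_eq_iff)
    moreover have "g \<in> chains (ind_complex V E) d"
      using g by (auto simp: star_chains_def chains_def)
    ultimately show "g \<in> with_vertex v ` chains (ind_complex V E) d" by (metis image_eqI)
  qed
qed

lemma star_chains_subspace: "fv.subspace (star_chains d :: ('a set \<Rightarrow> 'k::field) set)"
  using fvp.linear_subspace_image[OF with_vertex_linear chains_subspace] with_vertex_chains by metis

lemma star_chains_span_delta_Pow:
  "(star_chains d :: ('a set \<Rightarrow> 'k::field) set) \<subseteq> fv.span (delta ` Pow V)"
  by (rule fv_subset_span_delta_Pow[OF finV]) (auto simp: star_chains_def ind_complex_def)

lemma star_chains_0: "(star_chains 0 :: ('a set \<Rightarrow> 'k::field) set) = {0}"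
proof -
  have "g = 0" if "g \<in> (star_chains 0 :: ('a set \<Rightarrow> 'k) set)" for g
    using that finite_face[OF finV] by (fastforce simp: star_chains_def fun_eq_iff)
  then show ?thesis by (auto simp: star_chains_def)
qed

lemma chain_dim_split:
  "chain_dim TYPE('k::field) (ind_complex V E) d
     = chain_dim TYPE('k) (ind_complex (V - {v}) E) d + fv.dim (star_chains d :: ('a set \<Rightarrow> 'k) set)"
proof -
  have ker: "{f \<in> (chains (ind_complex V E) d :: ('a set \<Rightarrow> 'k) set). with_vertex v f = 0}
      = chains (ind_complex (V - {v}) E) d"
    by (auto simp: chains_def with_vertex_def ind_complex_Diff_vertex fun_eq_iff; metis)
  have "fv.dim (chains (ind_complex V E) d :: ('a set \<Rightarrow> 'k) set)
     = fv.dim (with_vertex v ` (chains (ind_complex V E) d :: ('a set \<Rightarrow> 'k) set))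
       + fv.dim {f \<in> (chains (ind_complex V E) d :: ('a set \<Rightarrow> 'k) set). with_vertex v f = 0}"
    by (rule fv_rank_nullity[OF with_vertex_linear chains_subspace _
          chains_span_delta_Pow]) (use finV in simp)
  then show ?thesis unfolding chain_dim_def ker with_vertex_chains by simp
qed

lemma dim_delete_vertex_image:
  assumes S: "fv.subspace S" "S \<subseteq> fv.span (delta ` Pow V)"
    and supp: "\<And>h \<sigma>. h \<in> S \<Longrightarrow> (h :: 'a set \<Rightarrow> 'k::field) \<sigma> \<noteq> 0 \<Longrightarrow> v \<in> \<sigma>"
  shows "fv.dim (delete_vertex v ` S) = fv.dim S"
proof (rule fv_dim_image_inj[OF delete_vertex_linear S(1) _ S(2)])
  fix h assume h: "h \<in> S" "delete_vertex v h = 0"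
  have "h \<sigma> = 0" for \<sigma>
  proof (rule ccontr)
    assume nz: "h \<sigma> \<noteq> 0"
    then have "delete_vertex v h (\<sigma> - {v}) = vertex_sign v (\<sigma> - {v}) * h \<sigma>"
      using supp[OF h(1)] by (simp add: delete_vertex_def insert_absorb)
    then show False using h(2) nz by (simp add: vertex_sign_def)
  qed
  then show "h = 0" by (simp add: fun_eq_iff)
qed (use finV in simp)

lemma delete_vertex_star_chains_subset:
  "delete_vertex v ` star_chains (Suc d)
     \<subseteq> (chains (ind_complex (V - closed_nbhd E v) E) d :: ('a set \<Rightarrow> 'k::field) set)"
proof (clarsimp simp: chains_def)
  fix g :: "'a set \<Rightarrow> 'k" and \<rho> assume g: "g \<in> star_chains (Suc d)"
    and nz: "delete_vertex v g \<rho> \<noteq> 0"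
  then have v: "v \<notin> \<rho>" and "g (insert v \<rho>) \<noteq> 0"
    by (auto simp: delete_vertex_def split: if_splits)
  then have "insert v \<rho> \<in> ind_complex V E" "card (insert v \<rho>) = Suc d"
    using g by (auto simp: star_chains_def)
  moreover have "finite \<rho>" using finite_face[OF finV \<open>insert v \<rho> \<in> ind_complex V E\<close>] by simp
  ultimately show "\<rho> \<in> ind_complex (V - closed_nbhd E v) E \<and> card \<rho> = d"
    using ind_complex_Diff_closed_nbhd[OF vV noloop] v by auto
qed

lemma chains_link_subset_delete_vertex_image:
  "(chains (ind_complex (V - closed_nbhd E v) E) d :: ('a set \<Rightarrow> 'k::field) set)
     \<subseteq> delete_vertex v ` star_chains (Suc d)"
proof
  note link = ind_complex_Diff_closed_nbhd[OF vV noloop]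
  fix h :: "'a set \<Rightarrow> 'k" assume h: "h \<in> chains (ind_complex (V - closed_nbhd E v) E) d"
  define g where "g \<sigma> = (if v \<in> \<sigma> then vertex_sign v (\<sigma> - {v}) * h (\<sigma> - {v}) else 0)" for \<sigma>
  have "g \<in> star_chains (Suc d)"
  proof (clarsimp simp: star_chains_def)
    fix \<sigma> assume "g \<sigma> \<noteq> 0"
    then have v: "v \<in> \<sigma>" and "h (\<sigma> - {v}) \<noteq> 0" by (auto simp: g_def split: if_splits)
    then have "\<sigma> - {v} \<in> ind_complex (V - closed_nbhd E v) E" and c: "card (\<sigma> - {v}) = d"
      using h by (auto simp: chains_def)
    then have s: "\<sigma> \<in> ind_complex V E" using link v by (metis insert_Diff)
    then have "card \<sigma> = Suc d" using c v finite_face[OF finV s] by (metis card_Suc_Diff1)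
    then show "\<sigma> \<in> ind_complex V E \<and> card \<sigma> = Suc d \<and> v \<in> \<sigma>" using s v by simp
  qed
  moreover have "delete_vertex v g \<rho> = h \<rho>" for \<rho>
  proof (cases "v \<in> \<rho>")
    case True
    then have "\<rho> \<notin> ind_complex (V - closed_nbhd E v) E" using link by blast
    then show ?thesis using True h by (auto simp: delete_vertex_def chains_def)
  next
    case False
    then show ?thesis
      by (simp add: delete_vertex_def g_def mult.assoc[symmetric] vertex_sign_square)
  qed
  ultimately show "h \<in> delete_vertex v ` star_chains (Suc d)" by (metis image_eqI ext)
qed

lemma delete_vertex_star_chains:
  "delete_vertex v ` star_chains (Suc d)
     = (chains (ind_complex (V - closed_nbhd E v) E) d :: ('a set \<Rightarrow> 'k::field) set)"
  using delete_vertex_star_chains_subset chains_link_subset_delete_vertex_image by blast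

lemma dim_star_chains_Suc:
  "fv.dim (star_chains (Suc d) :: ('a set \<Rightarrow> 'k::field) set)
     = chain_dim TYPE('k) (ind_complex (V - closed_nbhd E v) E) d"
proof -
  have "fv.dim (delete_vertex v ` (star_chains (Suc d) :: ('a set \<Rightarrow> 'k) set))
      = fv.dim (star_chains (Suc d) :: ('a set \<Rightarrow> 'k) set)"
    by (rule dim_delete_vertex_image[OF star_chains_subspace star_chains_span_delta_Pow])
       (auto simp: star_chains_def)
  then show ?thesis unfolding chain_dim_def delete_vertex_star_chains by simp
qed

lemma chains_Diff_vertex_subset:
  "chains (ind_complex (V - {v}) E) d \<subseteq> chains (ind_complex V E) d"
  by (auto simp: chains_def ind_complex_Diff_vertex)

lemma boundary_Diff_vertex:
  "f \<in> chains (ind_complex (V - {v}) E) d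
     \<Longrightarrow> boundary (ind_complex V E) f = boundary (ind_complex (V - {v}) E) f"
  by (rule boundary_subcomplex[OF finite_ind_complex[OF finV]])
     (auto simp: ind_complex_Diff_vertex chains_def)

lemma with_vertex_boundary_Diff_vertex:
  "with_vertex v (boundary (ind_complex (V - {v}) E) (f :: 'a set \<Rightarrow> 'k::field)) = 0"
proof -
  have "{\<sigma> \<in> ind_complex (V - {v}) E. \<tau> \<subseteq> \<sigma> \<and> card \<sigma> = card \<tau> + 1} = {}" if "v \<in> \<tau>" for \<tau>
    using that by (auto simp: ind_complex_def)
  then show ?thesis unfolding with_vertex_def boundary_def by (auto simp: fun_eq_iff simp del: Collect_empty_eq)
qed

lemma boundary_rank_split:
  "boundary_rank TYPE('k::field) (ind_complex (V - {v}) E) d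
    + fv.dim (with_vertex v ` boundary (ind_complex V E) ` (chains (ind_complex V E) d :: ('a set \<Rightarrow> 'k) set))
    \<le> boundary_rank TYPE('k) (ind_complex V E) d"
proof -
  define W where "W = boundary (ind_complex V E) ` (chains (ind_complex V E) d :: ('a set \<Rightarrow> 'k) set)"
  have Wspan: "W \<subseteq> fv.span (delta ` Pow V)"
    unfolding W_def by (rule boundary_image_span_delta_Pow)
  have "fv.dim W = fv.dim (with_vertex v ` W) + fv.dim {w \<in> W. with_vertex v w = 0}"
    by (rule fv_rank_nullity[OF with_vertex_linear _ _ Wspan])
       (simp_all add: W_def boundary_image_subspace finV)
  moreover have "boundary (ind_complex (V - {v}) E) ` (chains (ind_complex (V - {v}) E) d :: ('a set \<Rightarrow> 'k) set)
      \<subseteq> {w \<in> W. with_vertex v w = 0}"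
  proof (clarsimp simp: W_def)
    fix f :: "'a set \<Rightarrow> 'k" assume f: "f \<in> chains (ind_complex (V - {v}) E) d"
    then have "boundary (ind_complex (V - {v}) E) f = boundary (ind_complex V E) f"
      by (rule boundary_Diff_vertex[symmetric])
    then show "boundary (ind_complex (V - {v}) E) f \<in> boundary (ind_complex V E) ` chains (ind_complex V E) d
        \<and> with_vertex v (boundary (ind_complex (V - {v}) E) f) = 0"
      using f chains_Diff_vertex_subset with_vertex_boundary_Diff_vertex by blast
  qed
  then have "boundary_rank TYPE('k) (ind_complex (V - {v}) E) d \<le> fv.dim {w \<in> W. with_vertex v w = 0}"
    unfolding boundary_rank_def
    by (rule fv_dim_subset[of _ _ "delta ` Pow V"]) (use Wspan finV in auto)
  ultimately show ?thesis unfolding W_def boundary_rank_def by simp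
qed

lemma with_vertex_boundary_with_vertex:
  assumes f: "f \<in> (chains (ind_complex V E) d :: ('a set \<Rightarrow> 'k::field) set)"
  shows "with_vertex v (boundary (ind_complex V E) f)
    = with_vertex v (boundary (ind_complex V E) (with_vertex v f))"
proof -
  have rest: "without_vertex v f \<in> chains (ind_complex (V - {v}) E) d"
    using f by (auto simp: chains_def without_vertex_def ind_complex_Diff_vertex)
  have "f = with_vertex v f + without_vertex v f"
    by (auto simp: with_vertex_def without_vertex_def fun_eq_iff)
  then have "with_vertex v (boundary (ind_complex V E) f)
      = with_vertex v (boundary (ind_complex V E) (with_vertex v f))
        + with_vertex v (boundary (ind_complex V E) (without_vertex v f))"
    using fvp.linear_add[OF boundary_linear] fvp.linear_add[OF with_vertex_linear] by metis
  then show ?thesis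
    using boundary_Diff_vertex[OF rest] with_vertex_boundary_Diff_vertex by simp
qed

lemma bij_betw_insert_vertex_cofaces:
  assumes "v \<notin> \<rho>"
  shows "bij_betw (insert v)
    {\<rho>' \<in> ind_complex (V - closed_nbhd E v) E. \<rho> \<subseteq> \<rho>' \<and> card \<rho>' = card \<rho> + 1}
    {\<sigma> \<in> ind_complex V E. insert v \<rho> \<subseteq> \<sigma> \<and> card \<sigma> = card (insert v \<rho>) + 1}"
    (is "bij_betw _ ?R ?L")
proof -
  note link = ind_complex_Diff_closed_nbhd[OF vV noloop]
  have to_L: "insert v \<rho>' \<in> ?L \<and> insert v \<rho>' - {v} = \<rho>'" if "\<rho>' \<in> ?R" for \<rho>'
  proof -
    from that have \<rho>': "\<rho>' \<in> ind_complex (V - closed_nbhd E v) E" "\<rho> \<subseteq> \<rho>'"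
      "card \<rho>' = card \<rho> + 1" by simp_all
    have v: "v \<notin> \<rho>'" "insert v \<rho>' \<in> ind_complex V E" using link \<rho>'(1) by simp_all
    have "finite \<rho>'" using finite_face[OF finV v(2)] by simp
    then have "card (insert v \<rho>') = card (insert v \<rho>) + 1"
      using \<rho>'(2,3) v(1) assms finite_subset[OF \<rho>'(2)] by simp
    then show ?thesis using v \<rho>'(2) by auto
  qed
  have to_R: "\<sigma> - {v} \<in> ?R \<and> insert v (\<sigma> - {v}) = \<sigma>" if "\<sigma> \<in> ?L" for \<sigma>
  proof -
    from that have \<sigma>: "\<sigma> \<in> ind_complex V E" "insert v \<rho> \<subseteq> \<sigma>"
      "card \<sigma> = card (insert v \<rho>) + 1" by simp_all
    have fin: "finite \<sigma>" using finite_face[OF finV \<sigma>(1)] .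
    moreover have "\<rho> \<subseteq> \<sigma>" using \<sigma>(2) by simp
    ultimately have "finite \<rho>" by (simp add: finite_subset)
    then have "card (\<sigma> - {v}) = card \<rho> + 1" using \<sigma>(2,3) fin assms by (simp add: card_Diff_singleton)
    moreover have "\<sigma> - {v} \<in> ind_complex (V - closed_nbhd E v) E"
      using link \<sigma>(1,2) by (simp add: insert_absorb)
    ultimately show ?thesis using \<sigma>(2) assms by auto
  qed
  show ?thesis
    by (rule bij_betw_byWitness[where f'="\<lambda>\<sigma>. \<sigma> - {v}"]) (use to_L to_R in blast)+
qed

lemma delete_vertex_boundary:
  fixes g :: "'a set \<Rightarrow> 'k::field"
  assumes g: "\<And>\<sigma>. g \<sigma> \<noteq> 0 \<Longrightarrow> v \<in> \<sigma>"
  shows "delete_vertex v (with_vertex v (boundary (ind_complex V E) g))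
    = boundary (ind_complex (V - closed_nbhd E v) E) (delete_vertex v g)"
proof
  fix \<rho> :: "'a set"
  note link = ind_complex_Diff_closed_nbhd[OF vV noloop]
  define R where "R = {\<rho>' \<in> ind_complex (V - closed_nbhd E v) E. \<rho> \<subseteq> \<rho>' \<and> card \<rho>' = card \<rho> + 1}"
  define L where "L = {\<sigma> \<in> ind_complex V E. insert v \<rho> \<subseteq> \<sigma> \<and> card \<sigma> = card (insert v \<rho>) + 1}"
  define F where "F \<sigma> = vertex_sign v \<rho> * (bd_sign \<sigma> (insert v \<rho>) * g \<sigma>)" for \<sigma>
  show "delete_vertex v (with_vertex v (boundary (ind_complex V E) g)) \<rho>
      = boundary (ind_complex (V - closed_nbhd E v) E) (delete_vertex v g) \<rho>"
  proof (cases "v \<in> \<rho>")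
    case True
    then have "R = {}" using link by (auto simp: R_def)
    then show ?thesis using True
      unfolding delete_vertex_def boundary_def R_def[symmetric] by simp
  next
    case False
    have "bd_sign \<rho>' \<rho> * delete_vertex v g \<rho>' = F (insert v \<rho>')" if "\<rho>' \<in> R" for \<rho>'
    proof -
      have "v \<notin> \<rho>'" "insert v \<rho>' \<in> ind_complex V E" using that link by (auto simp: R_def)
      then have fin: "finite \<rho>'" using finite_face[OF finV] by (metis finite_insert)
      have sub: "\<rho> \<subseteq> \<rho>'" and "card \<rho>' = card \<rho> + 1" using that by (auto simp: R_def)
      then have "card (\<rho>' - \<rho>) = 1" using fin finite_subset[OF sub fin] by (simp add: card_Diff_subset)
      then obtain u where "\<rho>' - \<rho> = {u}" by (rule card_1_singletonE)
      then have u: "\<rho>' = insert u \<rho>" "u \<notin> \<rho>" using sub by auto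
      show ?thesis using bd_sign_insert_vertex[of \<rho> v u, where 'k='k] \<open>v \<notin> \<rho>'\<close> u fin False
        by (simp add: F_def delete_vertex_def ac_simps)
    qed
    then have "boundary (ind_complex (V - closed_nbhd E v) E) (delete_vertex v g) \<rho>
        = (\<Sum>\<rho>'\<in>R. F (insert v \<rho>'))" unfolding boundary_def R_def[symmetric] by simp
    also have "\<dots> = sum F L"
      unfolding R_def L_def by (rule sum.reindex_bij_betw[OF bij_betw_insert_vertex_cofaces[OF False]])
    finally show ?thesis
      using False unfolding delete_vertex_def with_vertex_def boundary_def L_def[symmetric]
      by (simp add: F_def sum_distrib_left)
  qed
qed

lemma dim_with_vertex_boundary_image:
  "fv.dim (with_vertex v ` boundary (ind_complex V E) `
      (chains (ind_complex V E) (Suc d) :: ('a set \<Rightarrow> 'k::field) set))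
    = boundary_rank TYPE('k) (ind_complex (V - closed_nbhd E v) E) d"
proof -
  define P where "P = with_vertex v ` boundary (ind_complex V E) `
    (chains (ind_complex V E) (Suc d) :: ('a set \<Rightarrow> 'k) set)"
  have P_star: "P = (\<lambda>g. with_vertex v (boundary (ind_complex V E) g)) ` star_chains (Suc d)"
    unfolding P_def with_vertex_chains[symmetric] image_image
    by (rule image_cong[OF refl with_vertex_boundary_with_vertex])
  have "delete_vertex v ` P = boundary (ind_complex (V - closed_nbhd E v) E) `
      (chains (ind_complex (V - closed_nbhd E v) E) d :: ('a set \<Rightarrow> 'k) set)"
    unfolding P_star image_image delete_vertex_star_chains[symmetric] image_image
    by (intro image_cong[OF refl delete_vertex_boundary]) (auto simp: star_chains_def)
  moreover have "fv.dim (delete_vertex v ` P) = fv.dim P"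
  proof (rule dim_delete_vertex_image)
    show "fv.subspace P"
      unfolding P_def by (rule fvp.linear_subspace_image[OF with_vertex_linear boundary_image_subspace])
    show "P \<subseteq> fv.span (delta ` Pow V)"
      unfolding P_def by (intro fv_subset_span_delta_Pow[OF finV])
        (auto simp: with_vertex_def split: if_splits dest!: boundary_nonzero_imp_subset[OF ind_complex_subset_Pow])
    show "\<And>h \<sigma>. h \<in> P \<Longrightarrow> h \<sigma> \<noteq> 0 \<Longrightarrow> v \<in> \<sigma>"
      unfolding P_def by (auto simp: with_vertex_def split: if_splits)
  qed
  ultimately show ?thesis unfolding boundary_rank_def P_def by simp
qed

lemma without_vertex_boundary_star_chain:
  assumes g: "g \<in> (star_chains d :: ('a set \<Rightarrow> 'k::field) set)"
    and \<sigma>: "\<sigma> \<in> ind_complex V E" "v \<in> \<sigma>"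
  shows "without_vertex v (boundary (ind_complex V E) g) (\<sigma> - {v}) = bd_sign \<sigma> (\<sigma> - {v}) * g \<sigma>"
proof -
  define L where "L = {\<sigma>' \<in> ind_complex V E. \<sigma> - {v} \<subseteq> \<sigma>' \<and> card \<sigma>' = card (\<sigma> - {v}) + 1}"
  have finL: "finite L" using finite_ind_complex[OF finV] by (simp add: L_def)
  have card\<sigma>: "card \<sigma> = card (\<sigma> - {v}) + 1"
    using card_Suc_Diff1[OF finite_face[OF finV \<sigma>(1)] \<sigma>(2)] by simp
  then have \<sigma>L: "\<sigma> \<in> L" using \<sigma>(1) by (simp add: L_def)
  have "g \<sigma>' = 0" if "\<sigma>' \<in> L" "\<sigma>' \<noteq> \<sigma>" for \<sigma>'
  proof (rule ccontr)
    assume "g \<sigma>' \<noteq> 0"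
    then have "v \<in> \<sigma>'" and \<sigma>'K: "\<sigma>' \<in> ind_complex V E" using g by (auto simp: star_chains_def)
    then have "\<sigma> \<subseteq> \<sigma>'" "card \<sigma> = card \<sigma>'" using that(1) card\<sigma> by (auto simp: L_def)
    then show False using card_subset_eq[OF finite_face[OF finV \<sigma>'K]] that(2) by blast
  qed
  then have "(\<Sum>\<sigma>'\<in>L. bd_sign \<sigma>' (\<sigma> - {v}) * g \<sigma>') = bd_sign \<sigma> (\<sigma> - {v}) * g \<sigma>"
    using sum.remove[OF finL \<sigma>L, of "\<lambda>\<sigma>'. bd_sign \<sigma>' (\<sigma> - {v}) * g \<sigma>'"] by simp
  then show ?thesis unfolding without_vertex_def boundary_def L_def[symmetric] by simp
qed

lemma dim_star_chains_le_boundary_rank: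
  "fv.dim (star_chains d :: ('a set \<Rightarrow> 'k::field) set) \<le> boundary_rank TYPE('k) (ind_complex V E) d"
proof -
  define T where "T g = without_vertex v (boundary (ind_complex V E) (g :: 'a set \<Rightarrow> 'k))" for g
  have linT: "Vector_Spaces.linear sc sc T"
    unfolding T_def using Vector_Spaces.linear_compose[OF boundary_linear without_vertex_linear]
    by (simp add: comp_def)
  have "g = 0" if g: "g \<in> star_chains d" and Tg: "T g = 0" for g
  proof -
    have "g \<sigma> = 0" for \<sigma>
      using without_vertex_boundary_star_chain[OF g, of \<sigma>] g Tg bd_sign_nonzero
      by (auto simp: T_def star_chains_def fun_eq_iff)
    then show ?thesis by (simp add: fun_eq_iff)
  qed
  then have "fv.dim (star_chains d :: ('a set \<Rightarrow> 'k) set) = fv.dim (T ` star_chains d)"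
    by (intro fv_dim_image_inj[OF linT star_chains_subspace _ star_chains_span_delta_Pow, symmetric])
       (use finV in auto)
  also have "\<dots> \<le> fv.dim (T ` (chains (ind_complex V E) d :: ('a set \<Rightarrow> 'k) set))"
  proof (rule fv_dim_subset[of _ _ "delta ` Pow V"])
    show "T ` star_chains d \<subseteq> T ` chains (ind_complex V E) d"
      by (auto simp: star_chains_def chains_def)
    show "T ` (chains (ind_complex V E) d :: ('a set \<Rightarrow> 'k) set) \<subseteq> fv.span (delta ` Pow V)"
      by (intro fv_subset_span_delta_Pow[OF finV])
        (auto simp: T_def without_vertex_def split: if_splits dest!: boundary_nonzero_imp_subset[OF ind_complex_subset_Pow])
  qed (use finV in simp)
  also have "T ` (chains (ind_complex V E) d :: ('a set \<Rightarrow> 'k) set)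
      = without_vertex v ` boundary (ind_complex V E) ` chains (ind_complex V E) d"
    by (auto simp: T_def)
  also have "fv.dim \<dots> \<le> boundary_rank TYPE('k) (ind_complex V E) d"
    unfolding boundary_rank_def
    by (rule fv_dim_image_le[OF without_vertex_linear boundary_image_subspace _
          boundary_image_span_delta_Pow]) (use finV in simp)
  finally show ?thesis .
qed

lemma reduced_betti_vertex_split:
  "reduced_betti TYPE('k::field) (ind_complex V E) d
    \<le> reduced_betti TYPE('k) (ind_complex (V - {v}) E) d
      + (case d of 0 \<Rightarrow> 0 | Suc e \<Rightarrow> reduced_betti TYPE('k) (ind_complex (V - closed_nbhd E v) E) e)"
proof -
  have betti: "reduced_betti TYPE('k) (ind_complex V' E) d'
      = (chain_dim TYPE('k) (ind_complex V' E) d' - boundary_rank TYPE('k) (ind_complex V' E) d')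
        - boundary_rank TYPE('k) (ind_complex V' E) (Suc d')" if "V' \<subseteq> V" for V' d'
    using reduced_betti_eq[OF finite_subset[OF that finV] ind_complex_subset_Pow] .
  note rank = boundary_rank_split[where 'k='k]
  note rank_Suc = rank[of "Suc _", unfolded dim_with_vertex_boundary_image]
  show ?thesis
  proof (cases d)
    case 0
    show ?thesis
      unfolding 0 betti[OF order_refl] betti[OF Diff_subset]
      using chain_dim_split[of 0, unfolded star_chains_0 fv_dim_zero, where 'k='k]
        rank[of 0] rank_Suc[of 0] by simp
  next
    case (Suc e)
    show ?thesis
      unfolding Suc betti[OF order_refl] betti[OF Diff_subset] nat.case
      using chain_dim_split[of d, unfolded Suc dim_star_chains_Suc, where 'k='k]
        rank_Suc[of e] rank_Suc[of "Suc e"] by linarith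
  qed
qed

lemma reduced_betti_cone:
  assumes "\<forall>u\<in>V. {u, v} \<notin> E"
  shows "reduced_betti TYPE('k::field) (ind_complex V E) d = 0"
proof -
  have "V - closed_nbhd E v = V - {v}" using assms by (auto simp: closed_nbhd_def)
  then show ?thesis
    using reduced_betti_eq[OF finV ind_complex_subset_Pow, where 'k='k]
      chain_dim_split[of d, where 'k='k] dim_star_chains_Suc[of d, where 'k='k]
      dim_star_chains_le_boundary_rank[of d, where 'k='k]
      dim_star_chains_le_boundary_rank[of "Suc d", where 'k='k]
    by simp
qed

lemma btilde_vertex_split:
  "btilde TYPE('k::field) V E \<le> btilde TYPE('k) (V - {v}) E + btilde TYPE('k) (V - closed_nbhd E v) E"
proof -
  define m where "m = card (V - {v})"
  have m: "card V = Suc m" unfolding m_def using card_Suc_Diff1[OF finV vV] by simp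
  have "card (V - closed_nbhd E v) \<le> card (V - {v})"
    using finV by (intro card_mono) (auto simp: closed_nbhd_def)
  then have card_link: "card (V - closed_nbhd E v) \<le> m" by (simp add: m_def)
  have "btilde TYPE('k) V E = (\<Sum>d\<le>Suc m. reduced_betti TYPE('k) (ind_complex V E) d)"
    using btilde_eq_sum_upto[OF finV, of "Suc m", where 'k='k] m by simp
  also have "\<dots> \<le> (\<Sum>d\<le>Suc m. reduced_betti TYPE('k) (ind_complex (V - {v}) E) d
      + (case d of 0 \<Rightarrow> 0 | Suc e \<Rightarrow> reduced_betti TYPE('k) (ind_complex (V - closed_nbhd E v) E) e))"
    by (rule sum_mono) (rule reduced_betti_vertex_split)
  also have "\<dots> = (\<Sum>d\<le>Suc m. reduced_betti TYPE('k) (ind_complex (V - {v}) E) d)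
      + (\<Sum>e\<le>m. reduced_betti TYPE('k) (ind_complex (V - closed_nbhd E v) E) e)"
    unfolding sum.distrib by (simp only: sum.atMost_Suc_shift nat.case add_0)
  also have "\<dots> = btilde TYPE('k) (V - {v}) E + btilde TYPE('k) (V - closed_nbhd E v) E"
    using btilde_eq_sum_upto[of "V - {v}" "Suc m", where 'k='k]
      btilde_eq_sum_upto[of "V - closed_nbhd E v" m, where 'k='k]
      finV card_link by (simp add: m_def)
  finally show ?thesis .
qed

lemma btilde_cone: "\<forall>u\<in>V. {u, v} \<notin> E \<Longrightarrow> btilde TYPE('k::field) V E = 0"
  using btilde_eq_sum_upto[OF finV order_refl, where 'k='k] reduced_betti_cone[where 'k='k] by simp

end

section \<open>Numerical inequalities\<close>

lemma three_powr_quarter_ge: "1.3 \<le> (3::real) powr (1/4)"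
proof -
  have "((3::real) powr (1/4)) ^ 4 = 3" by (simp add: powr_power)
  moreover have "(1.3::real) ^ 4 \<le> 3" by (simp add: eval_nat_numeral)
  ultimately show ?thesis using power_le_imp_le_base[of "1.3::real" 3 "3 powr (1/4)"] by simp
qed

lemma le_three_powr_of_ge_5: "5 \<le> d \<Longrightarrow> real d \<le> 3 powr ((real d + 1) / 4)"
proof (induction d rule: dec_induct)
  case base
  have "((3::real) powr ((real 5 + 1) / 4)) ^ 2 = 3 powr (real 3)"
    by (simp add: powr_power)
  also have "\<dots> = 27" by (subst powr_realpow) auto
  finally have "real 5 ^ Suc 1 \<le> ((3::real) powr ((real 5 + 1) / 4)) ^ Suc 1"
    by (simp add: numeral_2_eq_2)
  then show ?case by (rule power_le_imp_le_base) simp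
next
  case (step n)
  have e: "(real (Suc n) + 1) / 4 = (real n + 1) / 4 + 1/4" by (simp add: field_simps)
  have "(3::real) powr ((real (Suc n) + 1) / 4) = 3 powr ((real n + 1) / 4) * 3 powr (1/4)"
    unfolding e by (rule powr_add)
  also have "\<dots> \<ge> real n * 1.3"
    using step.IH three_powr_quarter_ge by (intro mult_mono) auto
  finally show ?case using step.hyps by simp
qed

text \<open>This fails for \<open>d = 4\<close>, which is why \<open>K\<^sub>5\<close>-freeness is needed.\<close>

lemma le_three_powr_succ_quarter:
  assumes "1 \<le> d" "d \<noteq> 4"
  shows "real d \<le> 3 powr ((real d + 1) / 4)"
proof -
  consider "d = 1" | "d = 2" | "d = 3" | "5 \<le> d" using assms by linarith
  then show ?thesis
  proof cases
    case 1
    have "(1::real) \<le> 3 powr ((1 + 1) / 4)" by (rule ge_one_powr_ge_zero) auto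
    then show ?thesis using 1 by simp
  next
    case 2
    have "((3::real) powr ((2 + 1) / 4)) ^ 4 = 3 powr (of_nat 4 * ((2 + 1) / 4))"
      by (rule powr_power) simp
    also have "\<dots> = 3 powr (real 3)" by simp
    also have "\<dots> = 27" by (subst powr_realpow) auto
    finally have "((3::real) powr ((2 + 1) / 4)) ^ 4 = 27" .
    then have "(2::real) \<le> 3 powr ((2 + 1) / 4)"
      using power_le_imp_le_base[of "2::real" 3 "3 powr ((2 + 1) / 4)"] by simp
    then show ?thesis using 2 by simp
  next
    case 3
    then show ?thesis by simp
  qed (rule le_three_powr_of_ge_5)
qed

lemma degree_sum_bound:
  fixes n :: real
  assumes "1 \<le> d" "d \<noteq> 4"
  shows "real d * 3 powr ((n - real d - 1) / 4) \<le> 3 powr (n / 4)"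
proof -
  have e: "n / 4 = (n - real d - 1) / 4 + (real d + 1) / 4" by (simp add: field_simps)
  have "3 powr (n / 4) = 3 powr ((n - real d - 1) / 4) * 3 powr ((real d + 1) / 4)"
    unfolding e by (rule powr_add)
  moreover have "real d * 3 powr ((n - real d - 1) / 4)
      \<le> 3 powr ((real d + 1) / 4) * 3 powr ((n - real d - 1) / 4)"
    by (rule mult_right_mono[OF le_three_powr_succ_quarter[OF assms]]) simp
  ultimately show ?thesis by (simp add: mult.commute)
qed

lemma degree_four_sum_bound:
  fixes n :: real
  shows "3 * 3 powr ((n - 5) / 4) + 3 powr ((n - 6) / 4) \<le> 3 powr (n / 4)"
proof -
  define q where "q = (3::real) powr ((n - 6) / 4)"
  define t where "t = (3::real) powr (1/4)"
  have e1: "(n - 5) / 4 = (n - 6) / 4 + 1/4" by (simp add: field_simps)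
  have a: "3 powr ((n - 5) / 4) = q * t" unfolding e1 q_def t_def by (rule powr_add)
  have e2: "n / 4 = (n - 6) / 4 + 6/4" by (simp add: field_simps)
  have t6: "t ^ 6 = 3 powr (6/4)" unfolding t_def by (subst powr_power) auto
  have "t ^ 6 = t ^ 4 * t ^ 2" by (simp add: power_add[symmetric])
  then have t64: "t ^ 6 = 3 * t ^ 2" by (simp add: t_def powr_power)
  have b: "(3::real) powr (n / 4) = q * (3 * t ^ 2)"
    unfolding e2 powr_add q_def t64[symmetric] t6 by simp
  have "0 \<le> (t - 1.3) * (3 * t + 0.9)"
    using three_powr_quarter_ge by (intro mult_nonneg_nonneg) (auto simp: t_def)
  then have "3 * t + 1 \<le> 3 * t ^ 2" by (simp add: algebra_simps power2_eq_square)
  then have "q * (3 * t + 1) \<le> q * (3 * t ^ 2)" by (rule mult_left_mono) (simp add: q_def)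
  then show ?thesis unfolding a b q_def[symmetric] by (simp add: algebra_simps)
qed

section \<open>Induction on the number of vertices\<close>

definition nbhd :: "'a set \<Rightarrow> 'a set set \<Rightarrow> 'a \<Rightarrow> 'a set" where
  "nbhd V E w = {u\<in>V. {u, w} \<in> E}"

lemma has_clique_mono: "V' \<subseteq> V \<Longrightarrow> \<not> has_clique V E r \<Longrightarrow> \<not> has_clique V' E r"
  by (auto simp: has_clique_def)

lemma simple_graph_no_loops:
  assumes "simple_graph V E" shows "\<forall>u. {u} \<notin> E"
proof (intro allI notI)
  fix u assume "{u} \<in> E"
  then obtain a b where "a \<noteq> b" "{u} = {a, b}" using assms by (auto simp: simple_graph_def)
  then have "a \<in> {u}" "b \<in> {u}" by auto
  then show False using \<open>a \<noteq> b\<close> by simp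
qed

lemma btilde_empty_le_1: "btilde TYPE('k::field) ({} :: 'a::linorder set) E \<le> 1"
proof -
  have "(chains (ind_complex ({} :: 'a set) E) 0 :: ('a set \<Rightarrow> 'k) set) \<subseteq> fv.span (delta ` Pow {})"
    by (rule fv_subset_span_delta_Pow) (auto simp: chains_def ind_complex_def)
  then have "chain_dim TYPE('k) (ind_complex ({} :: 'a set) E) 0
      \<le> card (delta ` Pow ({} :: 'a set) :: ('a set \<Rightarrow> 'k) set)"
    unfolding chain_dim_def by (rule fv.dim_le_card) simp
  then show ?thesis
    using reduced_betti_eq[OF _ ind_complex_subset_Pow, of "{} :: 'a set" E 0, where 'k='k]
    by (simp add: btilde_def total_reduced_betti_def)
qed

lemma btilde_le_sum_along_list:
  fixes V :: "'a::linorder set"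
  assumes "finite V" "\<forall>u. {u} \<notin> E" "distinct ws" "set ws \<subseteq> V"
  shows "btilde TYPE('k::field) V E
    \<le> (\<Sum>i<length ws. btilde TYPE('k) (V - set (take i ws) - closed_nbhd E (ws ! i)) E)
      + btilde TYPE('k) (V - set ws) E"
  using assms
proof (induction ws arbitrary: V)
  case Nil
  then show ?case by simp
next
  case (Cons w ws)
  define f where "f i = btilde TYPE('k) (V - set (take i (w # ws)) - closed_nbhd E ((w # ws) ! i)) E" for i
  have "btilde TYPE('k) V E \<le> btilde TYPE('k) (V - {w}) E + f 0"
    using btilde_vertex_split[of V w E, where 'k='k] Cons.prems by (simp add: f_def)
  moreover have "btilde TYPE('k) (V - {w}) E \<le> (\<Sum>i<length ws. f (Suc i)) + btilde TYPE('k) (V - set (w # ws)) E"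
  proof -
    have "f (Suc i) = btilde TYPE('k) (V - {w} - set (take i ws) - closed_nbhd E (ws ! i)) E" for i
      by (simp add: f_def Diff_insert2[of V w "set (take i ws)"])
    moreover have "V - set (w # ws) = V - {w} - set ws" by auto
    ultimately show ?thesis by (simp only:) (rule Cons.IH, use Cons.prems in auto)
  qed
  moreover have "(\<Sum>i<length (w # ws). f i) = f 0 + (\<Sum>i<length ws. f (Suc i))"
    by (simp only: length_Cons sum.lessThan_Suc_shift)
  ultimately show ?case unfolding f_def by linarith
qed

lemma btilde_le_sum_over_nbhd:
  fixes V :: "'a::linorder set"
  assumes "finite V" "\<forall>u. {u} \<notin> E" "v \<in> V" "distinct ws" "set ws = nbhd V E v"
  shows "btilde TYPE('k::field) V E
    \<le> (\<Sum>i<length ws. btilde TYPE('k) (V - set (take i ws) - closed_nbhd E (ws ! i)) E)"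
proof -
  have "v \<notin> set ws" using assms(2,5) by (auto simp: nbhd_def)
  then have "btilde TYPE('k) (V - set ws) E = 0"
    using assms by (intro btilde_cone) (auto simp: nbhd_def)
  then show ?thesis
    using btilde_le_sum_along_list[OF assms(1,2,4), where 'k='k] assms(5) by (auto simp: nbhd_def)
qed

lemma card_Diff_closed_nbhd:
  assumes "finite V" "\<forall>u. {u} \<notin> E" "w \<in> V" "A \<subseteq> V" "A \<inter> insert w (nbhd V E w) = {}"
  shows "card (V - A - closed_nbhd E w) + card A + card (nbhd V E w) + 1 = card V"
proof -
  define B where "B = A \<union> insert w (nbhd V E w)"
  have "V - A - closed_nbhd E w = V - B"
    by (auto simp: B_def closed_nbhd_def nbhd_def insert_commute)
  moreover have BV: "B \<subseteq> V" using assms(3,4) by (auto simp: B_def nbhd_def)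
  moreover have finB: "finite B" using finite_subset[OF BV assms(1)] .
  moreover have "w \<notin> nbhd V E w" using assms(2) by (auto simp: nbhd_def)
  then have "card B = card A + (card (nbhd V E w) + 1)"
    using finB assms(5) unfolding B_def by (simp add: card_Un_disjoint)
  ultimately show ?thesis
    using card_Diff_subset[OF finB BV] card_mono[OF assms(1) BV] by simp
qed

lemma nonadjacent_pair_in_nbhd:
  assumes "finite V" "\<forall>u. {u} \<notin> E" "v \<in> V" "card (nbhd V E v) = 4" "\<not> has_clique V E 5"
  shows "\<exists>a\<in>nbhd V E v. \<exists>b\<in>nbhd V E v. a \<noteq> b \<and> {a, b} \<notin> E"
proof (rule ccontr)
  assume "\<not> ?thesis"
  then have adj: "\<forall>a\<in>nbhd V E v. \<forall>b\<in>nbhd V E v. a \<noteq> b \<longrightarrow> {a, b} \<in> E" by blast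
  have "v \<notin> nbhd V E v" "finite (nbhd V E v)" using assms(1,2) by (auto simp: nbhd_def)
  then have "card (insert v (nbhd V E v)) = 5" using assms(4) by simp
  moreover have "\<forall>a\<in>insert v (nbhd V E v). \<forall>b\<in>insert v (nbhd V E v). a \<noteq> b \<longrightarrow> {a, b} \<in> E"
    using adj by (auto simp: nbhd_def insert_commute)
  moreover have "insert v (nbhd V E v) \<subseteq> V" using assms(3) by (auto simp: nbhd_def)
  ultimately have "has_clique V E 5" unfolding has_clique_def by blast
  then show False using assms(5) by simp
qed

lemma obtain_nbhd_list:
  assumes "finite V" "\<forall>u. {u} \<notin> E" "v \<in> V" "\<not> has_clique V E 5"
  obtains ws where "distinct ws" "set ws = nbhd V E v"
    and "card (nbhd V E v) = 4 \<Longrightarrow> {ws ! 0, ws ! 1} \<notin> E"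
proof (cases "card (nbhd V E v) = 4")
  case True
  then obtain a b where ab: "a \<in> nbhd V E v" "b \<in> nbhd V E v" "a \<noteq> b" "{a, b} \<notin> E"
    using nonadjacent_pair_in_nbhd[OF assms(1-3) _ assms(4)] by blast
  obtain rest where "distinct rest" "set rest = nbhd V E v - {a, b}"
    using finite_distinct_list[of "nbhd V E v - {a, b}"] assms(1) by (auto simp: nbhd_def)
  then show ?thesis using that[of "a # b # rest"] ab by auto
next
  case False
  obtain ws where "distinct ws" "set ws = nbhd V E v"
    using finite_distinct_list[of "nbhd V E v"] assms(1) by (auto simp: nbhd_def)
  then show ?thesis using that False by blast
qed

lemma btilde_nbhd_term_bound:
  fixes V :: "'a::linorder set"
  assumes fin: "finite V" and noloop: "\<forall>u. {u} \<notin> E" and v: "v \<in> V"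
    and min_deg: "\<And>w. w \<in> V \<Longrightarrow> card (nbhd V E v) \<le> card (nbhd V E w)"
    and IH: "\<And>V'. V' \<subset> V \<Longrightarrow> real (btilde TYPE('k::field) V' E) \<le> 3 powr (real (card V') / 4)"
    and ws: "set ws = nbhd V E v" "i < length ws"
    and A: "A \<subseteq> set (take i ws)" "A \<inter> insert (ws ! i) (nbhd V E (ws ! i)) = {}"
  shows "real (btilde TYPE('k) (V - set (take i ws) - closed_nbhd E (ws ! i)) E)
    \<le> 3 powr ((real (card V) - card A - card (nbhd V E v) - 1) / 4)"
proof -
  define W where "W = V - set (take i ws) - closed_nbhd E (ws ! i)"
  have w: "ws ! i \<in> V" using ws nth_mem by (fastforce simp: nbhd_def)
  have AV: "A \<subseteq> V" using A(1) ws(1) set_take_subset by (fastforce simp: nbhd_def)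
  have "ws ! i \<notin> W" by (simp add: W_def closed_nbhd_def)
  then have "W \<subset> V" using w by (auto simp: W_def)
  have "card W \<le> card (V - A - closed_nbhd E (ws ! i))"
    using A(1) fin by (intro card_mono) (auto simp: W_def)
  then have "real (card W) \<le> real (card V) - card A - card (nbhd V E v) - 1"
    using card_Diff_closed_nbhd[OF fin noloop w AV A(2)] min_deg[OF w] by linarith
  then have "3 powr (real (card W) / 4) \<le> 3 powr ((real (card V) - card A - card (nbhd V E v) - 1) / 4)"
    by (intro powr_mono) auto
  with IH[OF \<open>W \<subset> V\<close>] show ?thesis unfolding W_def by linarith
qed

lemma btilde_bound_step:
  fixes V :: "'a::linorder set"
  assumes fin: "finite V" and noloop: "\<forall>u. {u} \<notin> E" and noK5: "\<not> has_clique V E 5"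
    and v: "v \<in> V" and min_deg: "\<And>w. w \<in> V \<Longrightarrow> card (nbhd V E v) \<le> card (nbhd V E w)"
    and IH: "\<And>V'. V' \<subset> V \<Longrightarrow> real (btilde TYPE('k::field) V' E) \<le> 3 powr (real (card V') / 4)"
  shows "real (btilde TYPE('k) V E) \<le> 3 powr (real (card V) / 4)"
proof -
  define d where "d = card (nbhd V E v)"
  define n where "n = real (card V)"
  obtain ws where ws: "distinct ws" "set ws = nbhd V E v" and ws01: "d = 4 \<Longrightarrow> {ws ! 0, ws ! 1} \<notin> E"
    using obtain_nbhd_list[OF fin noloop v noK5] unfolding d_def by blast
  have len: "length ws = d" using distinct_card[OF ws(1)] ws(2) by (simp add: d_def)
  note term_bound = btilde_nbhd_term_bound[OF fin noloop v min_deg IH ws(2)]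
  define T where "T i = real (btilde TYPE('k) (V - set (take i ws) - closed_nbhd E (ws ! i)) E)" for i
  have T: "T i \<le> 3 powr ((n - d - 1) / 4)" if "i < d" for i
    using term_bound[of i "{}"] that len by (simp add: T_def n_def d_def)
  have "real (btilde TYPE('k) V E) \<le> (\<Sum>i<d. T i)"
    using btilde_le_sum_over_nbhd[OF fin noloop v ws, where 'k='k] len
    unfolding T_def of_nat_sum[symmetric] of_nat_le_iff by simp
  also have "\<dots> \<le> 3 powr (n / 4)"
  proof -
    consider "d = 0" | "d = 4" | "1 \<le> d" "d \<noteq> 4" by linarith
    then show ?thesis
    proof cases
      case 2
      have "ws ! 0 \<notin> insert (ws ! 1) (nbhd V E (ws ! 1))"
        using ws01[OF 2] ws(1) len 2 by (auto simp: nbhd_def nth_eq_iff_index_eq)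
      moreover have "set (take 1 ws) = {ws ! 0}" using len 2 by (cases ws) auto
      ultimately have "T 1 \<le> 3 powr ((n - 6) / 4)"
        using term_bound[of 1 "{ws ! 0}"] len 2 by (simp add: T_def n_def d_def)
      moreover have "(n - d - 1) / 4 = (n - 5) / 4" using 2 by simp
      moreover have "(\<Sum>i<d. T i) = T 0 + T 1 + T 2 + T 3" using 2 by (simp add: eval_nat_numeral)
      ultimately have "(\<Sum>i<d. T i) \<le> 3 * 3 powr ((n - 5) / 4) + 3 powr ((n - 6) / 4)"
        using T[of 0] T[of 2] T[of 3] 2 by simp
      then show ?thesis using degree_four_sum_bound by (rule order_trans)
    next
      case 3
      have "(\<Sum>i<d. T i) \<le> real d * 3 powr ((n - d - 1) / 4)"
        using sum_mono[of "{..<d}" T "\<lambda>_. 3 powr ((n - d - 1) / 4)"] T by simp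
      then show ?thesis using degree_sum_bound[OF 3] by (rule order_trans)
    qed simp
  qed
  finally show ?thesis by (simp add: n_def)
qed

theorem btilde_K5_free_le:
  fixes V :: "'a::linorder set"
  assumes "finite V" "\<forall>u. {u} \<notin> E" "\<not> has_clique V E 5"
  shows "real (btilde TYPE('k::field) V E) \<le> 3 powr (real (card V) / 4)"
  using assms
proof (induction "card V" arbitrary: V rule: less_induct)
  case less
  show ?case
  proof (cases "V = {}")
    case True
    then show ?thesis using btilde_empty_le_1[where 'k='k] by simp
  next
    case False
    then obtain v0 where "v0 \<in> V" by blast
    then obtain v where v: "v \<in> V" "\<And>w. w \<in> V \<Longrightarrow> card (nbhd V E v) \<le> card (nbhd V E w)"
      using ex_has_least_nat[of "\<lambda>w. w \<in> V" v0 "\<lambda>w. card (nbhd V E w)"] by blast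
    show ?thesis
    proof (rule btilde_bound_step[OF less.prems v])
      fix V' assume "V' \<subset> V"
      then show "real (btilde TYPE('k) V' E) \<le> 3 powr (real (card V') / 4)"
        using less.hyps[of V'] less.prems psubset_card_mono[OF less.prems(1)]
          finite_subset[of V' V] has_clique_mono[of V' V E 5] by auto
    qed
  qed
qed

theorem proposition6p1:
  fixes V :: "'a::linorder set" and E :: "'a set set" and n :: nat
  assumes "simple_graph V E"
    and "card V \<le> n"
    and "\<not> has_clique V E 5"
  shows "real (btilde TYPE('k::field) V E) \<le> 3 powr (real n / 4)"
proof -
  have "finite V" using assms(1) by (simp add: simple_graph_def)
  then have "real (btilde TYPE('k) V E) \<le> 3 powr (real (card V) / 4)"
    by (rule btilde_K5_free_le[OF _ simple_graph_no_loops[OF assms(1)] assms(3)])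
  also have "\<dots> \<le> 3 powr (real n / 4)"
    using assms(2) by (intro powr_mono) auto
  finally show ?thesis .
qed

end
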